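(* Let $d\ge1$ and let $c_1\ge c_2\ge\cdots\ge c_d\ge 0$ be real numbers. Define $\nu\in\mathbb R^{2\times\cdots\times2}$ with binary indices $i_1,\dots,i_d\in\{0,1\}$ by $\nu(i_1,\dots,i_d)=\max\{c_k: i_k=1\}$ if some $i_k=1$, and $\nu(0,\dots,0)=0$. Then $\nu$ admits an exact TT-decomposition all of whose TT-ranks are at most $2$. *)

theory Defs
  imports Complex_Main
begin

text \<open>Tensors of order d with binary mode sizes are functions on index lists
  i of length d with entries in {0,1}; position k-1 of the list is the index i_k.\<close>

definition binary_index :: "nat \<Rightarrow> nat list \<Rightarrow> bool" where
  "binary_index d i \<longleftrightarrow> length i = d \<and> set i \<subseteq> {0, 1}"

text \<open>Exact TT-decomposition with TT-ranks r 0 = 1, r 1, ..., r (d-1), r d = 1 and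
  cores G k (k = 1..d), G k a j b being the entry G_k(a, j, b) with a < r (k-1),
  j the mode index, b < r k:
  T(i_1..i_d) = sum over alpha of prod_k G_k(alpha_(k-1), i_k, alpha_k).\<close>

definition tt_repr ::
  "nat \<Rightarrow> (nat \<Rightarrow> nat) \<Rightarrow> (nat \<Rightarrow> nat \<Rightarrow> nat \<Rightarrow> nat \<Rightarrow> real) \<Rightarrow> (nat list \<Rightarrow> real) \<Rightarrow> bool" where
  "tt_repr d r G T \<longleftrightarrow>
     r 0 = 1 \<and> r d = 1 \<and> (\<forall>k\<le>d. r k \<ge> 1) \<and>
     (\<forall>i. binary_index d i \<longrightarrow>
        T i = (\<Sum>\<alpha>\<in>{\<alpha>. (\<forall>k\<le>d. \<alpha> k < r k) \<and> (\<forall>k>d. \<alpha> k = 0)}.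
                 \<Prod>k\<in>{1..d}. G k (\<alpha> (k - 1)) (i ! (k - 1)) (\<alpha> k)))"

text \<open>The tensor nu; c k (k < d) stands for c_(k+1).\<close>

definition nu_tensor :: "nat \<Rightarrow> (nat \<Rightarrow> real) \<Rightarrow> nat list \<Rightarrow> real" where
  "nu_tensor d c i =
     (if \<exists>k<d. i ! k = 1 then Max {c k | k. k < d \<and> i ! k = 1} else 0)"

end

(* A tensor that admits a deterministic weighted automaton reading i_1, ..., i_d has a TT
   decomposition whose ranks are the numbers of states: the core G_k(a, j, b) is the weight
   of the transition a -> b on letter j, so only the run of the automaton contributes to the
   TT sum, and the entry is the product of the weights along it.  For decreasing c, the
   maximum in nu is c at the first 1, which a two-state automaton ("no 1 read yet" / "a 1
   has been read") computes. *)

theory Submission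
  imports Defs
begin

definition tt_indices :: "nat \<Rightarrow> (nat \<Rightarrow> nat) \<Rightarrow> (nat \<Rightarrow> nat) set" where
  "tt_indices d r = {\<alpha>. (\<forall>k\<le>d. \<alpha> k < r k) \<and> (\<forall>k>d. \<alpha> k = 0)}"

lemma finite_tt_indices: "finite (tt_indices d r)"
proof (rule finite_subset)
  show "tt_indices d r \<subseteq>
      {\<alpha>. \<forall>k. (k \<in> {..d} \<longrightarrow> \<alpha> k \<in> {..<Max (r ` {..d})}) \<and> (k \<notin> {..d} \<longrightarrow> \<alpha> k = 0)}"
  proof (intro subsetI CollectI allI conjI impI)
    fix \<alpha> k assume \<alpha>: "\<alpha> \<in> tt_indices d r"
    show "\<alpha> k = 0" if "k \<notin> {..d}" using \<alpha> that by (simp add: tt_indices_def)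
    assume "k \<in> {..d}"
    then have "\<alpha> k < r k" and "r k \<le> Max (r ` {..d})"
      using \<alpha> by (simp_all add: tt_indices_def)
    then show "\<alpha> k \<in> {..<Max (r ` {..d})}" by simp
  qed
qed (intro finite_set_of_finite_funs; simp)

definition automaton_core ::
  "(nat \<Rightarrow> nat \<Rightarrow> nat \<Rightarrow> nat) \<Rightarrow> (nat \<Rightarrow> nat \<Rightarrow> nat \<Rightarrow> real) \<Rightarrow> nat \<Rightarrow> nat \<Rightarrow> nat \<Rightarrow> nat \<Rightarrow> real" where
  "automaton_core \<delta> w k a j b = (if b = \<delta> k a j then w k a j else 0)"

primrec automaton_run :: "(nat \<Rightarrow> nat \<Rightarrow> nat \<Rightarrow> nat) \<Rightarrow> nat list \<Rightarrow> nat \<Rightarrow> nat" where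
  "automaton_run \<delta> i 0 = 0"
| "automaton_run \<delta> i (Suc k) = \<delta> (Suc k) (automaton_run \<delta> i k) (i ! k)"

lemma automaton_run_pred:
  "k \<ge> 1 \<Longrightarrow> automaton_run \<delta> i k = \<delta> k (automaton_run \<delta> i (k - 1)) (i ! (k - 1))"
  by (cases k) auto

lemma automaton_path_eq_run:
  assumes "\<alpha> 0 = 0"
    and "(\<Prod>k\<in>{1..d}. automaton_core \<delta> w k (\<alpha> (k - 1)) (i ! (k - 1)) (\<alpha> k)) \<noteq> 0"
    and "n \<le> d"
  shows "\<alpha> n = automaton_run \<delta> i n"
  using assms(3)
proof (induction n)
  case (Suc n)
  have "automaton_core \<delta> w (Suc n) (\<alpha> n) (i ! n) (\<alpha> (Suc n)) \<noteq> 0"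
    using assms(2) Suc.prems by (auto dest: bspec[of _ _ "Suc n"])
  then show ?case
    using Suc by (simp add: automaton_core_def split: if_splits)
qed (use assms(1) in simp)

lemma tt_sum_automaton:
  assumes "r 0 = 1" and run_bounded: "\<And>k. k \<le> d \<Longrightarrow> automaton_run \<delta> i k < r k"
  shows "(\<Sum>\<alpha>\<in>tt_indices d r. \<Prod>k\<in>{1..d}. automaton_core \<delta> w k (\<alpha> (k - 1)) (i ! (k - 1)) (\<alpha> k))
       = (\<Prod>k\<in>{1..d}. w k (automaton_run \<delta> i (k - 1)) (i ! (k - 1)))"
proof -
  define run where "run k = (if k \<le> d then automaton_run \<delta> i k else 0)" for k
  define F where "F \<alpha> = (\<Prod>k\<in>{1..d}. automaton_core \<delta> w k (\<alpha> (k - 1)) (i ! (k - 1)) (\<alpha> k))"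
    for \<alpha>
  have run_mem: "run \<in> tt_indices d r"
    using run_bounded by (simp add: tt_indices_def run_def)
  have "F \<alpha> = 0" if "\<alpha> \<in> tt_indices d r" "\<alpha> \<noteq> run" for \<alpha>
  proof (rule ccontr)
    assume "F \<alpha> \<noteq> 0"
    moreover have "\<alpha> 0 = 0"
      using that(1) \<open>r 0 = 1\<close> by (auto simp: tt_indices_def)
    ultimately have "\<alpha> k = automaton_run \<delta> i k" if "k \<le> d" for k
      using automaton_path_eq_run[of \<alpha>] that unfolding F_def by blast
    moreover have "\<alpha> k = 0" if "k > d" for k
      using \<open>\<alpha> \<in> tt_indices d r\<close> that by (simp add: tt_indices_def)
    ultimately have "\<alpha> = run"
      by (auto simp: run_def fun_eq_iff)
    with \<open>\<alpha> \<noteq> run\<close> show False by contradiction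
  qed
  then have "sum F (tt_indices d r) = F run"
    using run_mem by (subst sum.mono_neutral_right[of _ "{run}"]) (auto simp: finite_tt_indices)
  also have "F run = (\<Prod>k\<in>{1..d}. w k (automaton_run \<delta> i (k - 1)) (i ! (k - 1)))"
    unfolding F_def
  proof (rule prod.cong)
    fix k assume "k \<in> {1..d}"
    then show "automaton_core \<delta> w k (run (k - 1)) (i ! (k - 1)) (run k)
        = w k (automaton_run \<delta> i (k - 1)) (i ! (k - 1))"
      by (auto simp: run_def automaton_core_def automaton_run_pred[of k])
  qed simp
  finally show ?thesis unfolding F_def .
qed

lemma Max_antitone_Least:
  fixes c :: "nat \<Rightarrow> 'a::linorder"
  assumes antitone: "\<And>k. Suc k < d \<Longrightarrow> c (Suc k) \<le> c k" and "\<exists>k<d. P k"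
  shows "Max {c k |k. k < d \<and> P k} = c (LEAST k. P k)"
proof -
  define L where "L = (LEAST k. P k)"
  have "P L" "L < d"
    using assms(2) LeastI_ex[of P] Least_le[of P] unfolding L_def by (blast, fastforce)
  have "c k \<le> c L" if "k < d" "P k" for k
  proof (rule lift_Suc_antimono_le_ivl[where N = "{k. Suc k < d}"])
    show "L \<le> k" using \<open>P k\<close> unfolding L_def by (rule Least_le)
    show "{L..<k} \<subseteq> {k. Suc k < d}" using \<open>k < d\<close> by auto
  qed (use antitone in simp)
  moreover have "finite {c k |k. k < d \<and> P k}" by simp
  ultimately show ?thesis
    using \<open>P L\<close> \<open>L < d\<close> unfolding L_def[symmetric] by (intro Max_eqI) auto
qed

lemma ex_less_Suc_iff: "(\<exists>m<Suc n. P m) \<longleftrightarrow> (\<exists>m<n. P m) \<or> P n"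
  using less_Suc_eq by auto

definition first_one :: "nat list \<Rightarrow> nat" where
  "first_one i = (LEAST m. i ! m = 1)"

lemma first_one_eqI: "i ! n = 1 \<Longrightarrow> \<not> (\<exists>m<n. i ! m = 1) \<Longrightarrow> first_one i = n"
  unfolding first_one_def by (intro Least_equality) (auto simp: not_less[symmetric])

lemma nu_tensor_eq_first_one:
  assumes "\<And>k. Suc k < d \<Longrightarrow> c (Suc k) \<le> c k"
  shows "nu_tensor d c i = (if \<exists>k<d. i ! k = 1 then c (first_one i) else 0)"
  using Max_antitone_Least[of d c "\<lambda>k. i ! k = 1", OF assms]
  by (auto simp: nu_tensor_def first_one_def)

text \<open>State 1 records that a 1 has been read: the first 1 contributes its weight c,
  all later letters weight 1, and the last core kills the run that never reads a 1.\<close>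

definition nu_transition :: "nat \<Rightarrow> nat \<Rightarrow> nat \<Rightarrow> nat \<Rightarrow> nat" where
  "nu_transition d k a j = (if k = d \<or> (a = 0 \<and> j \<noteq> 1) then 0 else 1)"

definition nu_weight :: "nat \<Rightarrow> (nat \<Rightarrow> real) \<Rightarrow> nat \<Rightarrow> nat \<Rightarrow> nat \<Rightarrow> real" where
  "nu_weight d c k a j =
     (if a = 0 \<and> j = 1 then c (k - 1) else if a = 0 \<and> k = d then 0 else 1)"

lemma nu_run:
  "k < d \<Longrightarrow> automaton_run (nu_transition d) i k = (if \<exists>m<k. i ! m = 1 then 1 else 0)"
  by (induction k) (simp_all add: nu_transition_def ex_less_Suc_iff)

lemma nu_run_last: "d \<ge> 1 \<Longrightarrow> automaton_run (nu_transition d) i d = 0"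
  by (cases d) (simp_all add: nu_transition_def)

lemma nu_weight_prefix_prod:
  assumes "n < d"
  shows "(\<Prod>k\<in>{1..n}. nu_weight d c k (automaton_run (nu_transition d) i (k - 1)) (i ! (k - 1)))
       = (if \<exists>m<n. i ! m = 1 then c (first_one i) else 1)"
  using assms
proof (induction n)
  case (Suc n)
  let ?w = "\<lambda>k. nu_weight d c k (automaton_run (nu_transition d) i (k - 1)) (i ! (k - 1))"
  have "prod ?w {1..Suc n} = ?w (Suc n) * prod ?w {1..n}"
    by (simp add: prod.nat_ivl_Suc')
  then show ?case
    using Suc by (cases "\<exists>m<n. i ! m = 1")
      (auto simp: nu_run nu_weight_def first_one_eqI ex_less_Suc_iff simp del: prod.cl_ivl_Suc)
qed simp

lemma nu_weight_prod:
  assumes "d \<ge> 1"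
  shows "(\<Prod>k\<in>{1..d}. nu_weight d c k (automaton_run (nu_transition d) i (k - 1)) (i ! (k - 1)))
       = (if \<exists>m<d. i ! m = 1 then c (first_one i) else 0)"
proof -
  obtain n where d: "d = Suc n" using assms by (cases d) auto
  let ?w = "\<lambda>k. nu_weight d c k (automaton_run (nu_transition d) i (k - 1)) (i ! (k - 1))"
  have "prod ?w {1..Suc n} = ?w (Suc n) * prod ?w {1..n}"
    by (simp add: prod.nat_ivl_Suc')
  then show ?thesis
    unfolding d using nu_weight_prefix_prod[of n "Suc n" c i]
    by (cases "\<exists>m<n. i ! m = 1")
      (auto simp: nu_run nu_weight_def first_one_eqI ex_less_Suc_iff simp del: prod.cl_ivl_Suc)
qed

lemma nu_run_bounded:
  assumes "d \<ge> 1" "k \<le> d"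
  shows "automaton_run (nu_transition d) i k < (if k = 0 \<or> k = d then 1 else 2)"
  using assms nu_run[of k d i] nu_run_last[of d i] by (cases "k = d") auto

theorem mainTheorem5:
  fixes d :: nat and c :: "nat \<Rightarrow> real"
  assumes "d \<ge> 1"
    and "\<And>k. Suc k < d \<Longrightarrow> c (Suc k) \<le> c k"
    and "\<And>k. k < d \<Longrightarrow> c k \<ge> 0"
  shows "\<exists>r G. tt_repr d r G (nu_tensor d c) \<and> (\<forall>k\<le>d. r k \<le> 2)"
proof -
  define r :: "nat \<Rightarrow> nat" where "r k = (if k = 0 \<or> k = d then 1 else 2)" for k
  let ?G = "automaton_core (nu_transition d) (nu_weight d c)"
  have "nu_tensor d c i =
      (\<Sum>\<alpha>\<in>tt_indices d r. \<Prod>k\<in>{1..d}. ?G k (\<alpha> (k - 1)) (i ! (k - 1)) (\<alpha> k))" for i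
  proof -
    have "(\<Sum>\<alpha>\<in>tt_indices d r. \<Prod>k\<in>{1..d}. ?G k (\<alpha> (k - 1)) (i ! (k - 1)) (\<alpha> k))
        = (\<Prod>k\<in>{1..d}. nu_weight d c k (automaton_run (nu_transition d) i (k - 1)) (i ! (k - 1)))"
      using \<open>d \<ge> 1\<close> by (intro tt_sum_automaton) (simp_all add: r_def nu_run_bounded)
    also have "\<dots> = nu_tensor d c i"
      using nu_weight_prod[OF \<open>d \<ge> 1\<close>] nu_tensor_eq_first_one[of d c, OF assms(2)] by simp
    finally show ?thesis ..
  qed
  moreover have "r 0 = 1" "r d = 1" "\<forall>k\<le>d. 1 \<le> r k" "\<forall>k\<le>d. r k \<le> 2"
    by (simp_all add: r_def)
  ultimately show ?thesis
    unfolding tt_repr_def tt_indices_def[symmetric] by blast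
qed

end
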